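(* Let $G$ be a connected, closed Lie subgroup of $SO_o(1,2)\ltimes\mathbb{R}^3\subset Iso(\mathbb{R}^3_1)$ which acts isometrically and with cohomogeneity one on $\mathbb{R}^3_1$. If $L(G)$ is conjugate to $SO(2)$ (i.e. to $K=\{\exp(tB_2):t\in\mathbb{R}\}$), then $G$ is conjugate within $SO_o(1,2)\ltimes\mathbb{R}^3$ to one of the following groups: (i) the standard embedding of $SO(2)\times\mathbb{R}$ in $SO_o(1,2)\ltimes\mathbb{R}^3$, namely $\{(\exp(tB_2),se_1):t,s\in\mathbb{R}\}$; (ii) the standard embedding of $Iso_o(\mathbb{R}^2)$ in $SO_o(1,2)\ltimes\mathbb{R}^3$, namely $\{(\exp(tB_2),ue_2+ve_3):t,u,v\in\mathbb{R}\}$.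
   Context: $\mathbb{R}^3_1$ is $\mathbb{R}^3$ with the scalar product $\langle x,y\rangle=-x_1y_1+x_2y_2+x_3y_3$; its isometry group is $Iso(\mathbb{R}^3_1)=O(1,2)\ltimes\mathbb{R}^3$, where $(A,a)$ acts by $x\mapsto Ax+a$; $SO_o(1,2)$ is the identity component of $O(1,2)$. $L:G\to SO_o(1,2)$, $(A,a)\mapsto A$, is the projection to the linear part. $E_{ij}$ is the $3\times3$ matrix with $1$ in entry $(i,j)$ and $0$ elsewhere, $e_1,e_2,e_3$ is the standard basis, and $B_2=E_{23}-E_{32}$. An action is of cohomogeneity one if some orbit has codimension one. *)

theory Defs
  imports "HOL-Analysis.Analysis"
begin

type_synonym mat3 = "real^3^3"
type_synonym vec3 = "real^3"
type_synonym aff = "mat3 \<times> vec3"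

definition lorentzJ :: mat3 where
  "lorentzJ = vector [vector [-1, 0, 0], vector [0, 1, 0], vector [0, 0, 1]]"

definition O12 :: "mat3 set" where
  "O12 = {A. transpose A ** lorentzJ ** A = lorentzJ}"

definition SOo12 :: "mat3 set" where
  "SOo12 = {A. A \<in> O12 \<and> det A = 1 \<and> A $ 1 $ 1 > 0}"

text \<open>Semidirect product SO_o(1,2) |x R^3; (A,a) acts by x \<mapsto> A x + a.\<close>
definition aff_mult :: "aff \<Rightarrow> aff \<Rightarrow> aff" where
  "aff_mult g h = (fst g ** fst h, fst g *v snd h + snd g)"

definition aff_inv :: "aff \<Rightarrow> aff" where
  "aff_inv g = (matrix_inv (fst g), - (matrix_inv (fst g) *v snd g))"

definition aff_one :: aff where
  "aff_one = (mat 1, 0)"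

definition SOo12_semidirect :: "aff set" where
  "SOo12_semidirect = SOo12 \<times> UNIV"

definition is_subgroup :: "aff set \<Rightarrow> bool" where
  "is_subgroup G \<longleftrightarrow> G \<subseteq> SOo12_semidirect \<and> aff_one \<in> G \<and>
     (\<forall>g\<in>G. \<forall>h\<in>G. aff_mult g h \<in> G) \<and> (\<forall>g\<in>G. aff_inv g \<in> G)"

definition Lpart :: "aff set \<Rightarrow> mat3 set" where
  "Lpart G = fst ` G"

text \<open>exp(t B_2) with B_2 = E_23 - E_32, written out explicitly.\<close>
definition expB2 :: "real \<Rightarrow> mat3" where
  "expB2 t = vector [vector [1, 0, 0], vector [0, cos t, sin t], vector [0, - sin t, cos t]]"

definition K :: "mat3 set" where
  "K = range expB2"

definition e1 :: vec3 where "e1 = vector [1, 0, 0]"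
definition e2 :: vec3 where "e2 = vector [0, 1, 0]"
definition e3 :: vec3 where "e3 = vector [0, 0, 1]"

text \<open>Tangent space at x of the orbit G x: the image of the Lie algebra of G
  (velocities at 0 of differentiable curves in G through the identity) under
  the differential of g \<mapsto> g x.\<close>
definition orbit_tangent :: "aff set \<Rightarrow> vec3 \<Rightarrow> vec3 set" where
  "orbit_tangent G x = {fst v *v x + snd v | v. \<exists>c. (\<forall>t. c t \<in> G) \<and> c 0 = aff_one \<and>
       (c has_vector_derivative v) (at 0)}"

text \<open>Cohomogeneity one: some orbit has codimension one in R^3, i.e. dimension 2.\<close>
definition cohomogeneity_one :: "aff set \<Rightarrow> bool" where
  "cohomogeneity_one G \<longleftrightarrow> (\<exists>x. dim (orbit_tangent G x) = 2)"

definition conj_aff :: "aff \<Rightarrow> aff set \<Rightarrow> aff set" where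
  "conj_aff g H = (\<lambda>h. aff_mult (aff_mult g h) (aff_inv g)) ` H"

definition SO2_times_R :: "aff set" where
  "SO2_times_R = {(expB2 t, s *\<^sub>R e1) | t s. True}"

definition Iso_R2 :: "aff set" where
  "Iso_R2 = {(expB2 t, u *\<^sub>R e2 + v *\<^sub>R e3) | t u v. True}"

end

theory Submission
  imports Defs
begin

text \<open>
  After conjugating by \<open>P\<close> we may assume \<open>L(G) = K\<close>. The pure translations of \<open>G\<close> form a
  closed \<open>K\<close>-invariant subgroup \<open>T\<close> of \<open>\<real>\<^sup>3\<close>, and by connectedness the screw motions
  \<open>(exp(\<theta> B\<^sub>2), s e\<^sub>1)\<close> in \<open>G\<close> contain a one-parameter subgroup.

  If \<open>T\<close> has a vector off the axis \<open>\<real> e\<^sub>1\<close>, rotating and averaging it shows that \<open>T\<close>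
  contains the plane \<open>span {e\<^sub>2, e\<^sub>3}\<close>. Then either no element of \<open>G\<close> moves along \<open>e\<^sub>1\<close>, and
  \<open>G = Iso\<^sub>o(\<real>\<^sup>2)\<close>, or some one-parameter subgroup does, and its velocity together with
  \<open>e\<^sub>2, e\<^sub>3\<close> spans the tangent space of every orbit, which is then open.

  If \<open>T \<subseteq> \<real> e\<^sub>1\<close>, the translation parts form a coboundary and a translation conjugates
  \<open>G\<close> into \<open>K \<times> \<real> e\<^sub>1\<close>. Then either \<open>T = \<real> e\<^sub>1\<close> and \<open>G = SO(2) \<times> \<real>\<close>, or \<open>T\<close> is
  discrete, \<open>G\<close> is a single screw line near the identity, and all orbits are curves.
\<close>

definition B2 :: mat3 where
  "B2 = vector [vector [0, 0, 0], vector [0, 0, 1], vector [0, -1, 0]]"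

lemma expB2_nth [simp]:
  "expB2 t $ 1 $ 1 = 1" "expB2 t $ 1 $ 2 = 0" "expB2 t $ 1 $ 3 = 0"
  "expB2 t $ 2 $ 1 = 0" "expB2 t $ 2 $ 2 = cos t" "expB2 t $ 2 $ 3 = sin t"
  "expB2 t $ 3 $ 1 = 0" "expB2 t $ 3 $ 2 = - sin t" "expB2 t $ 3 $ 3 = cos t"
  by (simp_all add: expB2_def)

lemma B2_nth [simp]:
  "B2 $ 1 $ 1 = 0" "B2 $ 1 $ 2 = 0" "B2 $ 1 $ 3 = 0"
  "B2 $ 2 $ 1 = 0" "B2 $ 2 $ 2 = 0" "B2 $ 2 $ 3 = 1"
  "B2 $ 3 $ 1 = 0" "B2 $ 3 $ 2 = - 1" "B2 $ 3 $ 3 = 0"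
  by (simp_all add: B2_def)

lemma e123_nth [simp]:
  "e1 $ 1 = 1" "e1 $ 2 = 0" "e1 $ 3 = 0"
  "e2 $ 1 = 0" "e2 $ 2 = 1" "e2 $ 3 = 0"
  "e3 $ 1 = 0" "e3 $ 2 = 0" "e3 $ 3 = 1"
  by (simp_all add: e1_def e2_def e3_def)

lemma mat_one_nth3 [simp]:
  "(mat 1 :: mat3) $ 1 $ 1 = 1" "(mat 1 :: mat3) $ 1 $ 2 = 0" "(mat 1 :: mat3) $ 1 $ 3 = 0"
  "(mat 1 :: mat3) $ 2 $ 1 = 0" "(mat 1 :: mat3) $ 2 $ 2 = 1" "(mat 1 :: mat3) $ 2 $ 3 = 0"
  "(mat 1 :: mat3) $ 3 $ 1 = 0" "(mat 1 :: mat3) $ 3 $ 2 = 0" "(mat 1 :: mat3) $ 3 $ 3 = 1"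
  by (simp_all add: mat_def)

lemma mat3_eq_iff: "(A::mat3) = B \<longleftrightarrow>
  A$1$1 = B$1$1 \<and> A$1$2 = B$1$2 \<and> A$1$3 = B$1$3 \<and>
  A$2$1 = B$2$1 \<and> A$2$2 = B$2$2 \<and> A$2$3 = B$2$3 \<and>
  A$3$1 = B$3$1 \<and> A$3$2 = B$3$2 \<and> A$3$3 = B$3$3"
  by (simp add: vec_eq_iff forall_3)

lemma vec3_eq_iff: "(a::vec3) = b \<longleftrightarrow> a$1 = b$1 \<and> a$2 = b$2 \<and> a$3 = b$3"
  by (simp add: vec_eq_iff forall_3)

lemma matrix_matrix_mult_nth3:
  "((A::mat3) ** B) $ i $ j = A$i$1 * B$1$j + A$i$2 * B$2$j + A$i$3 * B$3$j"
  by (simp add: matrix_matrix_mult_def sum_3)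

lemma matrix_vector_mult_nth3: "((A::mat3) *v x) $ i = A$i$1 * x$1 + A$i$2 * x$2 + A$i$3 * x$3"
  by (simp add: matrix_vector_mult_def sum_3)

lemma matrix_vector_mult_uminus_right [simp]:
  fixes A :: "'a::ring_1^'n^'m"
  shows "A *v (- x) = - (A *v x)"
  using matrix_vector_mult_diff_distrib[of A 0 x] by simp

lemma entry_le_norm_mat3: "\<bar>(A::mat3) $ i $ j\<bar> \<le> norm A"
  using component_le_norm_cart[of "A $ i" j] Finite_Cartesian_Product.norm_nth_le[of A i] by linarith

subsection \<open>Matrix inverses\<close>

lemma matrix_inv_right:
  fixes A :: "'a::semiring_1^'n^'n"
  assumes "invertible A"
  shows "A ** matrix_inv A = mat 1"
  using someI_ex[OF assms[unfolded invertible_def]] by (simp add: matrix_inv_def)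

lemma matrix_inv_left:
  fixes A :: "'a::semiring_1^'n^'n"
  assumes "invertible A"
  shows "matrix_inv A ** A = mat 1"
  using someI_ex[OF assms[unfolded invertible_def]] by (simp add: matrix_inv_def)

lemma matrix_inv_unique:
  fixes A B :: "'a::semiring_1^'n^'n"
  assumes "A ** B = mat 1" "B ** A = mat 1"
  shows "matrix_inv A = B"
proof -
  have inv: "invertible A" using assms unfolding invertible_def by blast
  have "matrix_inv A = (matrix_inv A ** A) ** B"
    by (simp add: matrix_mul_assoc[symmetric] assms(1) flip: matrix_mul_assoc)
  then show ?thesis by (simp add: matrix_inv_left[OF inv])
qed

lemma invertible_matrix_inv:
  fixes A :: "'a::semiring_1^'n^'n"
  shows "invertible A \<Longrightarrow> invertible (matrix_inv A)"
  using matrix_inv_left matrix_inv_right unfolding invertible_def by blast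

lemma matrix_inv_matrix_inv:
  fixes A :: "'a::semiring_1^'n^'n"
  shows "invertible A \<Longrightarrow> matrix_inv (matrix_inv A) = A"
  by (intro matrix_inv_unique matrix_inv_left matrix_inv_right)

lemma matrix_inv_mat_one: "matrix_inv (mat 1 :: 'a::semiring_1^'n^'n) = mat 1"
  by (rule matrix_inv_unique) simp_all

lemma invertible_mat_one: "invertible (mat 1 :: 'a::semiring_1^'n^'n)"
  unfolding invertible_def by (rule exI[of _ "mat 1"]) simp

subsection \<open>The rotations \<open>exp(t B\<^sub>2)\<close>\<close>

lemma expB2_add [simp]: "expB2 s ** expB2 t = expB2 (s + t)"
  by (simp add: mat3_eq_iff matrix_matrix_mult_nth3 cos_add sin_add)

lemma expB2_zero [simp]: "expB2 0 = mat 1"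
  by (simp add: mat3_eq_iff)

lemma expB2_periodic: "expB2 (t + 2 * pi) = expB2 t"
  by (simp add: mat3_eq_iff)

lemma matrix_inv_expB2 [simp]: "matrix_inv (expB2 t) = expB2 (- t)"
  by (rule matrix_inv_unique) (simp_all add: expB2_add)

lemma expB2_mult_expB2_minus [simp]:
  "expB2 t *v (expB2 (- t) *v a) = a" "expB2 (- t) *v (expB2 t *v a) = a"
  by (simp_all add: matrix_vector_mul_assoc expB2_add)

lemma expB2_e1 [simp]: "expB2 t *v e1 = e1"
  by (simp add: vec3_eq_iff matrix_vector_mult_nth3)

lemma expB2_eq_combination: "expB2 t = axis 1 (axis 1 1) + cos t *\<^sub>R (mat 1 - axis 1 (axis 1 1)) + sin t *\<^sub>R B2"
  by (simp add: mat3_eq_iff axis_def)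

lemma continuous_on_expB2 [continuous_intros]:
  fixes f :: "'a::t2_space \<Rightarrow> real"
  assumes "continuous_on S f"
  shows "continuous_on S (\<lambda>x. expB2 (f x))"
  unfolding expB2_eq_combination using assms by (intro continuous_intros)

lemma has_vector_derivative_expB2:
  "((\<lambda>t. expB2 (a * t)) has_vector_derivative (a *\<^sub>R B2)) (at 0)"
  unfolding expB2_eq_combination by (auto intro!: derivative_eq_intros)

lemma K_representative:
  assumes "k \<in> K"
  obtains \<theta> where "\<bar>\<theta>\<bar> \<le> pi" "k = expB2 \<theta>"
proof -
  obtain t where k: "k = expB2 t" using assms unfolding K_def by auto
  obtain u where u: "0 \<le> u" "u \<le> 2 * pi" "cos t = cos u" "sin t = sin u"
    using sincos_total_2pi_le[OF sin_cos_squared_add2] by metis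
  have ku: "k = expB2 u" unfolding k mat3_eq_iff expB2_nth using u(3,4) by simp
  show ?thesis
  proof (cases "u \<le> pi")
    case True
    then show ?thesis using that[OF _ ku] u(1) by simp
  next
    case False
    have "k = expB2 (u - 2 * pi)" using ku expB2_periodic[of "u - 2 * pi"] by simp
    then show ?thesis using that[of "u - 2 * pi"] False u(2) by simp
  qed
qed

lemma expB2_near_one:
  assumes "0 < \<eta>"
  obtains \<delta> where "0 < \<delta>" "\<And>\<theta>. \<bar>\<theta>\<bar> \<le> pi \<Longrightarrow> norm (expB2 \<theta> - mat 1) < \<delta> \<Longrightarrow> \<bar>\<theta>\<bar> < \<eta>"
proof -
  define \<eta>' where "\<eta>' = min \<eta> pi"
  have \<eta>': "0 < \<eta>'" "\<eta>' \<le> pi" "\<eta>' \<le> \<eta>" using assms unfolding \<eta>'_def by auto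
  have "cos \<eta>' < 1" using cos_mono_less_eq[of \<eta>' 0] \<eta>' by simp
  moreover have "\<bar>\<theta>\<bar> < \<eta>" if "\<bar>\<theta>\<bar> \<le> pi" "norm (expB2 \<theta> - mat 1) < 1 - cos \<eta>'" for \<theta>
  proof -
    have "\<bar>cos \<theta> - 1\<bar> < 1 - cos \<eta>'"
      using entry_le_norm_mat3[of "expB2 \<theta> - mat 1" 2 2] that(2) by simp
    then have "cos \<eta>' < cos \<bar>\<theta>\<bar>" by simp
    then show ?thesis using cos_mono_less_eq[of \<eta>' "\<bar>\<theta>\<bar>"] \<eta>' that(1) by simp
  qed
  ultimately show ?thesis using that[of "1 - cos \<eta>'"] by simp
qed

subsection \<open>The affine group and conjugation\<close>

definition aff_group :: "aff set \<Rightarrow> bool" where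
  "aff_group G \<longleftrightarrow> (\<forall>g\<in>G. invertible (fst g)) \<and> aff_one \<in> G \<and>
     (\<forall>g\<in>G. \<forall>h\<in>G. aff_mult g h \<in> G) \<and> (\<forall>g\<in>G. aff_inv g \<in> G)"

definition aff_conj :: "aff \<Rightarrow> aff \<Rightarrow> aff" where
  "aff_conj g h = aff_mult (aff_mult g h) (aff_inv g)"

lemma conj_aff_eq_image: "conj_aff g H = aff_conj g ` H"
  by (simp add: conj_aff_def aff_conj_def)

lemma aff_mult_Pair [simp]: "aff_mult (A, a) (B, b) = (A ** B, A *v b + a)"
  by (simp add: aff_mult_def)

lemma aff_inv_Pair [simp]: "aff_inv (A, a) = (matrix_inv A, - (matrix_inv A *v a))"
  by (simp add: aff_inv_def)

lemma aff_mult_assoc: "aff_mult (aff_mult g h) k = aff_mult g (aff_mult h k)"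
  by (simp add: aff_mult_def matrix_mul_assoc matrix_vector_mul_assoc algebra_simps)

lemma aff_mult_one_left [simp]: "aff_mult aff_one g = g"
  by (simp add: aff_mult_def aff_one_def)

lemma aff_mult_one_right [simp]: "aff_mult g aff_one = g"
  by (simp add: aff_mult_def aff_one_def)

lemma aff_mult_inv_right: "invertible (fst g) \<Longrightarrow> aff_mult g (aff_inv g) = aff_one"
  by (simp add: aff_mult_def aff_inv_def aff_one_def matrix_inv_right matrix_vector_mul_assoc)

lemma aff_mult_inv_left: "invertible (fst g) \<Longrightarrow> aff_mult (aff_inv g) g = aff_one"
  by (simp add: aff_mult_def aff_inv_def aff_one_def matrix_inv_left matrix_vector_mul_assoc)

lemma invertible_fst_aff_mult:
  "invertible (fst g) \<Longrightarrow> invertible (fst h) \<Longrightarrow> invertible (fst (aff_mult g h))"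
  by (simp add: aff_mult_def invertible_mult)

lemma invertible_fst_aff_inv: "invertible (fst g) \<Longrightarrow> invertible (fst (aff_inv g))"
  by (simp add: aff_inv_def invertible_matrix_inv)

lemma aff_inv_unique:
  assumes "invertible (fst g)" "aff_mult h g = aff_one"
  shows "aff_inv g = h"
proof -
  have "aff_inv g = aff_mult (aff_mult h g) (aff_inv g)" using assms(2) by simp
  also have "\<dots> = h" by (simp only: aff_mult_assoc aff_mult_inv_right[OF assms(1)] aff_mult_one_right)
  finally show ?thesis .
qed

lemma aff_inv_aff_mult:
  assumes "invertible (fst g)" "invertible (fst h)"
  shows "aff_inv (aff_mult g h) = aff_mult (aff_inv h) (aff_inv g)"
proof (rule aff_inv_unique)
  show "invertible (fst (aff_mult g h))" using assms by (rule invertible_fst_aff_mult)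
  have "aff_mult (aff_mult (aff_inv h) (aff_inv g)) (aff_mult g h)
      = aff_mult (aff_inv h) (aff_mult (aff_mult (aff_inv g) g) h)"
    by (simp only: aff_mult_assoc)
  then show "aff_mult (aff_mult (aff_inv h) (aff_inv g)) (aff_mult g h) = aff_one"
    by (simp add: assms aff_mult_inv_left)
qed

lemma aff_conj_Pair:
  "aff_conj (Q, b) (A, a) = (Q ** A ** matrix_inv Q, Q *v a + b - (Q ** A ** matrix_inv Q) *v b)"
  by (simp add: aff_conj_def matrix_vector_mul_assoc)

lemma fst_aff_conj: "fst (aff_conj g h) = fst g ** fst h ** matrix_inv (fst g)"
  by (simp add: aff_conj_def aff_mult_def aff_inv_def)

lemma aff_conj_aff_conj:
  "invertible (fst g) \<Longrightarrow> invertible (fst g') \<Longrightarrow> aff_conj g (aff_conj g' h) = aff_conj (aff_mult g g') h"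
  by (simp add: aff_conj_def aff_inv_aff_mult aff_mult_assoc)

lemma aff_inv_one [simp]: "aff_inv aff_one = aff_one"
  by (simp add: aff_inv_def aff_one_def matrix_inv_mat_one)

lemma aff_conj_one: "aff_conj aff_one h = h"
  by (simp add: aff_conj_def)

lemma aff_conj_inv_cancel [simp]:
  "invertible (fst g) \<Longrightarrow> aff_conj (aff_inv g) (aff_conj g h) = h"
  "invertible (fst g) \<Longrightarrow> aff_conj g (aff_conj (aff_inv g) h) = h"
  by (simp_all add: aff_conj_aff_conj invertible_fst_aff_inv aff_mult_inv_left aff_mult_inv_right
      aff_conj_one)

lemma image_aff_conj_inv [simp]: "invertible (fst g) \<Longrightarrow> aff_conj (aff_inv g) ` aff_conj g ` G = G"
  by (simp add: image_image)

lemma aff_conj_image_eq_iff: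
  assumes "invertible (fst h)"
  shows "aff_conj h ` G = X \<longleftrightarrow> G = aff_conj (aff_inv h) ` X"
  using assms by (auto simp: image_image)

lemma aff_conj_image_aff_conj_image:
  "invertible (fst g) \<Longrightarrow> invertible (fst g') \<Longrightarrow> aff_conj g ` aff_conj g' ` X = aff_conj (aff_mult g g') ` X"
  by (simp add: image_image aff_conj_aff_conj)

lemma aff_conj_mult:
  "invertible (fst g) \<Longrightarrow> aff_conj g (aff_mult h k) = aff_mult (aff_conj g h) (aff_conj g k)"
  unfolding aff_conj_def by (metis aff_mult_assoc aff_mult_inv_left aff_mult_one_left)

lemma aff_conj_inv:
  assumes g: "invertible (fst g)" and h: "invertible (fst h)"
  shows "aff_conj g (aff_inv h) = aff_inv (aff_conj g h)"
proof (rule aff_inv_unique[symmetric])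
  show "invertible (fst (aff_conj g h))"
    using g h by (simp add: fst_aff_conj invertible_mult invertible_matrix_inv)
  have "aff_mult (aff_conj g (aff_inv h)) (aff_conj g h) = aff_conj g aff_one"
    by (simp add: g h aff_mult_inv_left flip: aff_conj_mult)
  then show "aff_mult (aff_conj g (aff_inv h)) (aff_conj g h) = aff_one"
    by (simp add: g aff_conj_def aff_mult_inv_right)
qed

lemma aff_conj_one_right: "invertible (fst g) \<Longrightarrow> aff_conj g aff_one = aff_one"
  by (simp add: aff_conj_def aff_mult_inv_right)

lemma invertible_fst_aff_conj:
  "invertible (fst g) \<Longrightarrow> invertible (fst h) \<Longrightarrow> invertible (fst (aff_conj g h))"
  by (simp add: fst_aff_conj invertible_mult invertible_matrix_inv)

lemma aff_group_conj:
  assumes G: "aff_group G" and g: "invertible (fst g)"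
  shows "aff_group (aff_conj g ` G)"
  unfolding aff_group_def
proof (intro conjI ballI)
  show "aff_one \<in> aff_conj g ` G"
    using G aff_conj_one_right[OF g] unfolding aff_group_def by (metis image_eqI)
next
  fix x assume "x \<in> aff_conj g ` G"
  then obtain h where h: "h \<in> G" "x = aff_conj g h" by blast
  show "invertible (fst x)" using G h g unfolding aff_group_def by (simp add: invertible_fst_aff_conj)
  show "aff_inv x \<in> aff_conj g ` G"
    using G h g aff_conj_inv[OF g] unfolding aff_group_def by (metis image_eqI)
  fix y assume "y \<in> aff_conj g ` G"
  then obtain k where "k \<in> G" "y = aff_conj g k" by blast
  then show "aff_mult x y \<in> aff_conj g ` G"
    using G h aff_conj_mult[OF g] unfolding aff_group_def by (metis image_eqI)
qed

definition aff_conj_linear :: "mat3 \<Rightarrow> vec3 \<Rightarrow> aff \<Rightarrow> aff" where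
  "aff_conj_linear Q b h =
     (Q ** fst h ** matrix_inv Q, Q *v snd h - (Q ** fst h ** matrix_inv Q) *v b)"

lemma aff_conj_eq_linear: "aff_conj (Q, b) h = aff_conj_linear Q b h + (0, b)"
  by (cases h) (simp add: aff_conj_Pair aff_conj_linear_def)

lemma bounded_linear_aff_conj_linear: "bounded_linear (aff_conj_linear Q b)"
proof -
  have "linear (aff_conj_linear Q b)"
    by (rule linearI)
      (simp_all add: aff_conj_linear_def prod_eq_iff mat3_eq_iff vec3_eq_iff
        matrix_matrix_mult_nth3 matrix_vector_mult_nth3 algebra_simps)
  then show ?thesis by (rule linear_conv_bounded_linear[THEN iffD1])
qed

lemma continuous_aff_conj: "continuous (at h) (aff_conj g)"
proof (cases g)
  case (Pair Q b)
  have "continuous (at h) (\<lambda>h. aff_conj_linear Q b h + (0, b))"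
    by (intro continuous_intros linear_continuous_at bounded_linear_aff_conj_linear)
  moreover have "aff_conj (Q, b) = (\<lambda>h. aff_conj_linear Q b h + (0, b))"
    by (simp add: fun_eq_iff aff_conj_eq_linear)
  ultimately show ?thesis by (simp add: Pair)
qed

lemma closed_aff_conj_image:
  assumes g: "invertible (fst g)" and "closed G"
  shows "closed (aff_conj g ` G)"
proof -
  have "aff_conj g ` G = aff_conj (aff_inv g) -` G"
  proof
    show "aff_conj (aff_inv g) -` G \<subseteq> aff_conj g ` G"
      using g by (metis aff_conj_inv_cancel(2) image_eqI subsetI vimageE)
  qed (use g in auto)
  then show ?thesis by (simp add: continuous_closed_vimage continuous_aff_conj assms)
qed

lemma connected_aff_conj_image: "connected G \<Longrightarrow> connected (aff_conj g ` G)"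
  by (intro connected_continuous_image continuous_at_imp_continuous_on ballI continuous_aff_conj)

lemma orbit_tangent_aff_conj_image_subset:
  assumes Q: "invertible Q" and y: "y \<in> orbit_tangent G x"
  shows "Q *v y \<in> orbit_tangent (aff_conj (Q, b) ` G) (Q *v x + b)"
proof -
  obtain v c where yv: "y = fst v *v x + snd v" and c: "\<forall>t. c t \<in> G" "c 0 = aff_one"
    "(c has_vector_derivative v) (at 0)"
    using y unfolding orbit_tangent_def by blast
  have "((\<lambda>t. aff_conj_linear Q b (c t) + (0, b)) has_vector_derivative aff_conj_linear Q b v) (at 0)"
    using bounded_linear.has_vector_derivative[OF bounded_linear_aff_conj_linear c(3)]
    by (simp add: has_vector_derivative_add_const)
  then have "((\<lambda>t. aff_conj (Q, b) (c t)) has_vector_derivative aff_conj_linear Q b v) (at 0)"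
    by (simp add: aff_conj_eq_linear)
  moreover have "\<forall>t. aff_conj (Q, b) (c t) \<in> aff_conj (Q, b) ` G" "aff_conj (Q, b) (c 0) = aff_one"
    using c(1,2) Q by (simp_all add: aff_conj_one_right)
  moreover have "fst (aff_conj_linear Q b v) *v (Q *v x + b) + snd (aff_conj_linear Q b v) = Q *v y"
    by (simp add: aff_conj_linear_def yv matrix_vector_mul_assoc matrix_inv_left[OF Q]
        matrix_vector_right_distrib flip: matrix_mul_assoc)
  ultimately show ?thesis
    unfolding orbit_tangent_def mem_Collect_eq by (intro exI[of _ "aff_conj_linear Q b v"] conjI)
      (auto intro!: exI[of _ "\<lambda>t. aff_conj (Q, b) (c t)"])
qed

lemma orbit_tangent_aff_conj_image:
  assumes Q: "invertible Q"
  shows "orbit_tangent (aff_conj (Q, b) ` G) (Q *v x + b) = (*v) Q ` orbit_tangent G x"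
proof
  show "(*v) Q ` orbit_tangent G x \<subseteq> orbit_tangent (aff_conj (Q, b) ` G) (Q *v x + b)"
    using orbit_tangent_aff_conj_image_subset[OF Q] by blast
  show "orbit_tangent (aff_conj (Q, b) ` G) (Q *v x + b) \<subseteq> (*v) Q ` orbit_tangent G x"
  proof
    fix z assume z: "z \<in> orbit_tangent (aff_conj (Q, b) ` G) (Q *v x + b)"
    have "aff_inv (Q, b) = (matrix_inv Q, - (matrix_inv Q *v b))" by simp
    moreover have "matrix_inv Q *v (Q *v x + b) + - (matrix_inv Q *v b) = x"
      by (simp add: matrix_vector_right_distrib matrix_vector_mul_assoc matrix_inv_left[OF Q])
    ultimately have "matrix_inv Q *v z \<in> orbit_tangent G x"
      using orbit_tangent_aff_conj_image_subset[OF invertible_matrix_inv[OF Q] z] Q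
      by (metis fst_conv image_aff_conj_inv)
    moreover have "z = Q *v (matrix_inv Q *v z)"
      by (simp add: matrix_vector_mul_assoc matrix_inv_right[OF Q])
    ultimately show "z \<in> (*v) Q ` orbit_tangent G x" by blast
  qed
qed

lemma cohomogeneity_one_aff_conj_image:
  assumes Q: "invertible Q" and "cohomogeneity_one G"
  shows "cohomogeneity_one (aff_conj (Q, b) ` G)"
proof -
  obtain x where x: "dim (orbit_tangent G x) = 2"
    using assms(2) unfolding cohomogeneity_one_def by blast
  have "dim ((*v) Q ` orbit_tangent G x) = dim (orbit_tangent G x)"
    by (rule dim_image_eq)
      (auto intro: inj_matrix_vector_mult[OF Q] inj_on_subset)
  then show ?thesis
    using x orbit_tangent_aff_conj_image[OF Q] unfolding cohomogeneity_one_def by metis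
qed

subsection \<open>Closed additive subgroups\<close>

definition add_subgroup :: "'a::ab_group_add set \<Rightarrow> bool" where
  "add_subgroup S \<longleftrightarrow> 0 \<in> S \<and> (\<forall>a\<in>S. \<forall>b\<in>S. a - b \<in> S)"

lemma add_subgroup_uminus: "add_subgroup S \<Longrightarrow> a \<in> S \<Longrightarrow> - a \<in> S"
  unfolding add_subgroup_def by (metis diff_0)

lemma add_subgroup_add: "add_subgroup S \<Longrightarrow> a \<in> S \<Longrightarrow> b \<in> S \<Longrightarrow> a + b \<in> S"
  using add_subgroup_uminus unfolding add_subgroup_def by (metis diff_minus_eq_add)

lemma add_subgroup_of_nat_scaleR:
  fixes S :: "'a::real_vector set"
  assumes "add_subgroup S" "a \<in> S"
  shows "real n *\<^sub>R a \<in> S"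
proof (induction n)
  case 0
  then show ?case using assms(1) unfolding add_subgroup_def by simp
next
  case (Suc n)
  then show ?case using add_subgroup_add[OF assms(1) Suc assms(2)] by (simp add: algebra_simps)
qed

lemma add_subgroup_of_int_scaleR:
  fixes S :: "'a::real_vector set"
  assumes "add_subgroup S" "a \<in> S"
  shows "real_of_int n *\<^sub>R a \<in> S"
proof (cases "n \<ge> 0")
  case True
  then show ?thesis using add_subgroup_of_nat_scaleR[OF assms, of "nat n"] by simp
next
  case False
  then show ?thesis
    using add_subgroup_uminus[OF assms(1) add_subgroup_of_nat_scaleR[OF assms, of "nat (- n)"]] by simp
qed

lemma add_subgroup_segment_imp_line:
  fixes S :: "'a::real_vector set"
  assumes S: "add_subgroup S" and c: "c \<noteq> 0"
    and seg: "\<And>r. min 0 c \<le> r \<Longrightarrow> r \<le> max 0 c \<Longrightarrow> r *\<^sub>R w \<in> S"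
  shows "r *\<^sub>R w \<in> S"
proof -
  have small: "\<rho> *\<^sub>R w \<in> S" if "\<bar>\<rho>\<bar> \<le> \<bar>c\<bar>" for \<rho>
  proof -
    show ?thesis
    proof (cases "min 0 c \<le> \<rho> \<and> \<rho> \<le> max 0 c")
      case False
      then have "min 0 c \<le> - \<rho> \<and> - \<rho> \<le> max 0 c"
        using that unfolding min_def max_def abs_if by (auto split: if_splits)
      then show ?thesis using add_subgroup_uminus[OF S seg[of "- \<rho>"]] by simp
    qed (simp add: seg)
  qed
  define n where "n = nat \<lceil>\<bar>r\<bar> / \<bar>c\<bar>\<rceil> + 1"
  have n: "real n > 0" "\<bar>r\<bar> / \<bar>c\<bar> \<le> real n" unfolding n_def by linarith+
  then have "\<bar>r / real n\<bar> \<le> \<bar>c\<bar>" using c by (simp add: field_simps)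
  then have "real n *\<^sub>R ((r / real n) *\<^sub>R w) \<in> S" by (intro add_subgroup_of_nat_scaleR[OF S] small)
  then show ?thesis using n(1) by simp
qed

text \<open>\<open>t u\<close> is the limit of the multiples \<open>\<lfloor>t / \<parallel>z n\<parallel>\<rfloor> z n \<in> S\<close>.\<close>
lemma closed_add_subgroup_limit_direction:
  fixes S :: "'a::real_normed_vector set"
  assumes closed: "closed S" and S: "add_subgroup S" and z: "\<And>n. z n \<in> S" "\<And>n. z n \<noteq> 0"
    and z0: "(\<lambda>n. norm (z n)) \<longlonglongrightarrow> 0" and u: "(\<lambda>n. z n /\<^sub>R norm (z n)) \<longlonglongrightarrow> u"
  shows "t *\<^sub>R u \<in> S"
proof -
  define m where "m n = \<lfloor>t / norm (z n)\<rfloor>" for n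
  have d: "norm (z n) > 0" for n using z(2) by simp
  have "\<bar>of_int (m n) * norm (z n) - t\<bar> \<le> norm (z n)" for n
  proof -
    have "t / norm (z n) - 1 < of_int (m n)" "of_int (m n) \<le> t / norm (z n)"
      unfolding m_def by linarith+
    then have "t - norm (z n) < of_int (m n) * norm (z n)" "of_int (m n) * norm (z n) \<le> t"
      using d[of n] by (simp_all add: field_simps)
    then show ?thesis by simp
  qed
  then have "(\<lambda>n. of_int (m n) * norm (z n) - t) \<longlonglongrightarrow> 0"
    by (intro Lim_null_comparison[OF _ z0]) simp
  then have "(\<lambda>n. of_int (m n) * norm (z n)) \<longlonglongrightarrow> t" by (simp add: LIM_zero_iff)
  then have "(\<lambda>n. (of_int (m n) * norm (z n)) *\<^sub>R (z n /\<^sub>R norm (z n))) \<longlonglongrightarrow> t *\<^sub>R u"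
    by (intro tendsto_intros u)
  moreover have "(\<lambda>n. (of_int (m n) * norm (z n)) *\<^sub>R (z n /\<^sub>R norm (z n))) = (\<lambda>n. of_int (m n) *\<^sub>R z n)"
    using d by (simp add: fun_eq_iff less_imp_neq[symmetric])
  ultimately have "(\<lambda>n. of_int (m n) *\<^sub>R z n) \<longlonglongrightarrow> t *\<^sub>R u" by simp
  then show "t *\<^sub>R u \<in> S"
    by (rule closed_sequentially[OF closed add_subgroup_of_int_scaleR[OF S z(1)]])
qed

lemma closed_add_subgroup_contains_line:
  fixes S :: "'a::euclidean_space set"
  assumes closed: "closed S" and S: "add_subgroup S"
    and accum: "\<And>e. e > 0 \<Longrightarrow> \<exists>z\<in>S. z \<noteq> 0 \<and> norm z < e"
  obtains u where "u \<noteq> 0" "\<And>t. t *\<^sub>R u \<in> S"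
proof -
  have "\<forall>n. \<exists>z. z \<in> S \<and> z \<noteq> 0 \<and> norm z < 1 / (real n + 1)"
    using accum by (simp add: Bex_def)
  then obtain z where "\<forall>n. z n \<in> S \<and> z n \<noteq> 0 \<and> norm (z n) < 1 / (real n + 1)"
    by (rule choice[THEN exE])
  then have z: "\<And>n. z n \<in> S" "\<And>n. z n \<noteq> 0" "\<And>n. norm (z n) < 1 / (real n + 1)"
    by auto
  have "\<forall>n. z n /\<^sub>R norm (z n) \<in> sphere 0 1" using z(2) by simp
  then obtain u r where u: "u \<in> sphere 0 1" "strict_mono (r :: nat \<Rightarrow> nat)"
      "((\<lambda>n. z n /\<^sub>R norm (z n)) \<circ> r) \<longlonglongrightarrow> u"
    by (rule seq_compactE[OF compact_imp_seq_compact[OF compact_sphere]])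
  have lim: "(\<lambda>n. norm (z (r n))) \<longlonglongrightarrow> 0"
  proof -
    have "(\<lambda>n. inverse (real (Suc n))) \<longlonglongrightarrow> 0" by (rule LIMSEQ_inverse_real_of_nat)
    then have "(\<lambda>n. 1 / (real n + 1)) \<longlonglongrightarrow> 0" by (simp add: inverse_eq_divide add.commute)
    then have "(\<lambda>n. 1 / (real (r n) + 1)) \<longlonglongrightarrow> 0"
      using LIMSEQ_subseq_LIMSEQ[OF _ u(2)] by (simp add: o_def)
    moreover have "norm (norm (z (r n))) \<le> 1 / (real (r n) + 1)" for n
      using z(3)[of "r n"] by simp
    ultimately show ?thesis
      using Lim_null_comparison[of "\<lambda>n. norm (z (r n))" "\<lambda>n. 1 / (real (r n) + 1)"] by simp
  qed
  have "t *\<^sub>R u \<in> S" for t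
    by (rule closed_add_subgroup_limit_direction[OF closed S, of "\<lambda>n. z (r n)"])
      (use z lim u(3) in \<open>simp_all add: o_def\<close>)
  moreover have "u \<noteq> 0" using u(1) by auto
  ultimately show ?thesis using that by blast
qed

lemma closed_add_subgroup_real_eq_UNIV:
  fixes S :: "real set"
  assumes "closed S" "add_subgroup S" "\<And>e. e > 0 \<Longrightarrow> \<exists>z\<in>S. z \<noteq> 0 \<and> \<bar>z\<bar> < e"
  shows "S = UNIV"
proof -
  obtain u :: real where u: "u \<noteq> 0" "\<And>t. t *\<^sub>R u \<in> S"
    using closed_add_subgroup_contains_line[OF assms(1,2)] assms(3) by auto
  have "s \<in> S" for s using u(2)[of "s / u"] u(1) by simp
  then show ?thesis by blast
qed

subsection \<open>Subgroups with linear part \<open>K\<close>\<close>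

lemma aff_group_mult: "aff_group G \<Longrightarrow> g \<in> G \<Longrightarrow> h \<in> G \<Longrightarrow> aff_mult g h \<in> G"
  and aff_group_inv: "aff_group G \<Longrightarrow> g \<in> G \<Longrightarrow> aff_inv g \<in> G"
  and aff_group_one: "aff_group G \<Longrightarrow> (mat 1, 0) \<in> G"
  by (simp_all add: aff_group_def aff_one_def)

lemma fst_in_K_representative:
  assumes "fst ` G = K" "g \<in> G"
  obtains \<theta> where "g = (expB2 \<theta>, snd g)"
  using assms unfolding K_def by (metis image_iff prod.collapse)

lemma exists_over_expB2:
  assumes "fst ` G = K"
  obtains a where "(expB2 \<theta>, a) \<in> G"
proof -
  have "expB2 \<theta> \<in> fst ` G" using assms unfolding K_def by simp
  then show ?thesis using that by force
qed

definition translation_part :: "aff set \<Rightarrow> vec3 set" where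
  "translation_part G = {v. (mat 1, v) \<in> G}"

lemma add_subgroup_translation_part:
  assumes "aff_group G"
  shows "add_subgroup (translation_part G)"
proof -
  have "(mat 1, v - w) = aff_mult (mat 1, v) (aff_inv (mat 1, w))" for v w :: vec3
    by (simp add: matrix_inv_mat_one)
  then show ?thesis
    using assms unfolding add_subgroup_def translation_part_def
    by (auto intro: aff_group_one simp del: aff_mult_Pair aff_inv_Pair
        intro!: aff_group_mult aff_group_inv)
qed

lemma translation_part_add:
  assumes "aff_group G" "(A, a) \<in> G" "v \<in> translation_part G"
  shows "(A, a + v) \<in> G"
proof -
  have "aff_mult (mat 1, v) (A, a) \<in> G"
    using assms unfolding translation_part_def by (intro aff_group_mult) simp_all
  then show ?thesis by (simp add: add.commute)
qed

lemma expB2_translation_part: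
  assumes G: "aff_group G" and K: "fst ` G = K" and v: "v \<in> translation_part G"
  shows "expB2 \<theta> *v v \<in> translation_part G"
proof -
  obtain a where a: "(expB2 \<theta>, a) \<in> G" using exists_over_expB2[OF K] .
  have "aff_mult (aff_mult (expB2 \<theta>, a) (expB2 0, v)) (aff_inv (expB2 \<theta>, a)) \<in> G"
    using G a v unfolding translation_part_def
    by (intro aff_group_mult aff_group_inv) simp_all
  then show ?thesis unfolding translation_part_def by simp
qed

text \<open>Averaging \<open>v\<close> over the rotations by \<open>\<plusminus>\<theta>\<close> produces every multiple of its component
  orthogonal to the axis \<open>e\<^sub>1\<close>; two such components at a right angle span the plane.\<close>
lemma rotation_invariant_subgroup_orthogonal_line:
  assumes S: "add_subgroup S" and rot: "\<And>\<theta> v. v \<in> S \<Longrightarrow> expB2 \<theta> *v v \<in> S" and v: "v \<in> S"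
  shows "r *\<^sub>R (v - (v $ 1) *\<^sub>R e1) \<in> S"
proof (rule add_subgroup_segment_imp_line[OF S, of "-4"])
  fix c :: real assume "min 0 (-4) \<le> c" "c \<le> max 0 (-4)"
  then have "cos (arccos (1 + c / 2)) = 1 + c / 2" by (intro cos_arccos) auto
  then have "expB2 (arccos (1 + c / 2)) *v v + expB2 (- arccos (1 + c / 2)) *v v + - v + - v
      = c *\<^sub>R (v - (v $ 1) *\<^sub>R e1)"
    by (simp add: vec3_eq_iff matrix_vector_mult_nth3 algebra_simps)
  moreover have "expB2 (arccos (1 + c / 2)) *v v + expB2 (- arccos (1 + c / 2)) *v v + - v + - v \<in> S"
    by (intro add_subgroup_add[OF S] add_subgroup_uminus[OF S] rot v)
  ultimately show "c *\<^sub>R (v - (v $ 1) *\<^sub>R e1) \<in> S" by simp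
qed simp

lemma rotation_invariant_subgroup_contains_plane:
  assumes S: "add_subgroup S" and rot: "\<And>\<theta> v. v \<in> S \<Longrightarrow> expB2 \<theta> *v v \<in> S"
    and v: "v \<in> S" "v $ 2 \<noteq> 0 \<or> v $ 3 \<noteq> 0" and w: "w $ 1 = 0"
  shows "w \<in> S"
proof -
  define q where "q = expB2 (pi / 2) *v v"
  define n where "n = (v $ 2)\<^sup>2 + (v $ 3)\<^sup>2"
  have n: "n \<noteq> 0" using v(2) unfolding n_def by (simp add: sum_power2_eq_zero_iff)
  define \<alpha> where "\<alpha> = (w $ 2 * v $ 2 + w $ 3 * v $ 3) / n"
  define \<beta> where "\<beta> = (w $ 2 * v $ 3 - w $ 3 * v $ 2) / n"
  have "\<alpha> *\<^sub>R (v - (v $ 1) *\<^sub>R e1) + \<beta> *\<^sub>R (q - (q $ 1) *\<^sub>R e1) \<in> S"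
    unfolding q_def
    by (intro add_subgroup_add[OF S] rotation_invariant_subgroup_orthogonal_line[OF S rot] rot v)
  moreover have "\<alpha> *\<^sub>R (v - (v $ 1) *\<^sub>R e1) + \<beta> *\<^sub>R (q - (q $ 1) *\<^sub>R e1) = w"
  proof -
    have "(w $ 2 * v $ 2 + w $ 3 * v $ 3) * v $ 2 + (w $ 2 * v $ 3 - w $ 3 * v $ 2) * v $ 3 = w $ 2 * n"
      "(w $ 2 * v $ 2 + w $ 3 * v $ 3) * v $ 3 - (w $ 2 * v $ 3 - w $ 3 * v $ 2) * v $ 2 = w $ 3 * n"
      unfolding n_def by (simp_all add: power2_eq_square algebra_simps)
    then have "\<alpha> * v $ 2 + \<beta> * v $ 3 = w $ 2" "\<alpha> * v $ 3 - \<beta> * v $ 2 = w $ 3"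
      using n unfolding \<alpha>_def \<beta>_def
      by (simp_all only: times_divide_eq_left flip: add_divide_distrib diff_divide_distrib) simp_all
    then show ?thesis
      using w by (simp add: vec3_eq_iff q_def matrix_vector_mult_nth3)
  qed
  ultimately show ?thesis by simp
qed

lemma expB2_scaleR_e1 [simp]: "expB2 t *v (c *\<^sub>R e1) = c *\<^sub>R e1"
  by (simp add: matrix_vector_mult_scaleR)

definition screw_part :: "aff set \<Rightarrow> (real \<times> real) set" where
  "screw_part G = {p. (expB2 (fst p), snd p *\<^sub>R e1) \<in> G}"

lemma add_subgroup_screw_part:
  assumes "aff_group G"
  shows "add_subgroup (screw_part G)"
proof -
  have "(expB2 (a - b), (s - t) *\<^sub>R e1) = aff_mult (expB2 a, s *\<^sub>R e1) (aff_inv (expB2 b, t *\<^sub>R e1))"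
    for a b s t by (simp add: algebra_simps)
  then show ?thesis
    using assms unfolding add_subgroup_def screw_part_def
    by (auto intro: aff_group_one simp del: aff_mult_Pair aff_inv_Pair
        intro!: aff_group_mult aff_group_inv)
qed

lemma closed_screw_part:
  assumes "closed G"
  shows "closed (screw_part G)"
proof -
  have "continuous_on UNIV (\<lambda>p::real \<times> real. (expB2 (fst p), snd p *\<^sub>R e1))"
    by (intro continuous_intros)
  then have "closed (UNIV \<inter> (\<lambda>p::real \<times> real. (expB2 (fst p), snd p *\<^sub>R e1)) -` G)"
    using assms by (intro continuous_closed_preimage) simp_all
  then show ?thesis unfolding screw_part_def by (simp add: vimage_def)
qed

text \<open>Where the screw parameters are discrete, a neighbourhood of the identity in \<open>G\<close>
  meets only pure translations orthogonal to \<open>e\<^sub>1\<close>; this set is then open and closed in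
  the connected group \<open>G\<close>.\<close>
lemma discrete_screw_part_imp_linear_part_one:
  assumes G: "aff_group G" and conn: "connected G" and K: "fst ` G \<subseteq> K"
    and strip: "\<forall>g\<in>G. (fst g, (snd g $ 1) *\<^sub>R e1) \<in> G"
    and eps: "\<epsilon> > 0" and disc: "\<And>p. p \<in> screw_part G \<Longrightarrow> norm p < \<epsilon> \<Longrightarrow> p = 0"
    and g: "g \<in> G"
  shows "fst g = mat 1"
proof -
  obtain \<delta> where \<delta>: "0 < \<delta>" "\<And>\<theta>. \<bar>\<theta>\<bar> \<le> pi \<Longrightarrow> norm (expB2 \<theta> - mat 1) < \<delta> \<Longrightarrow> \<bar>\<theta>\<bar> < \<epsilon> / 2"
    using expB2_near_one[of "\<epsilon> / 2"] eps by auto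
  define U where "U = {h::aff. norm (fst h - mat 1) < min \<delta> (\<epsilon> / 2) \<and> \<bar>snd h $ 1\<bar> < min \<delta> (\<epsilon> / 2)}"
  define N where "N = {h::aff. fst h = mat 1 \<and> snd h $ 1 = 0}"
  have "open U" unfolding U_def by (intro open_Collect_conj open_Collect_less continuous_intros)
  have "closed N" unfolding N_def by (intro closed_Collect_conj closed_Collect_eq continuous_intros)
  have "G \<inter> U \<subseteq> N"
  proof
    fix h assume h: "h \<in> G \<inter> U"
    obtain \<theta> where \<theta>: "\<bar>\<theta>\<bar> \<le> pi" "fst h = expB2 \<theta>" using K h K_representative by blast
    have "\<bar>\<theta>\<bar> < \<epsilon> / 2" using \<delta>(2)[OF \<theta>(1)] h \<theta>(2) unfolding U_def by simp
    moreover have "\<bar>snd h $ 1\<bar> < \<epsilon> / 2" using h unfolding U_def by simp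
    ultimately have "norm (\<theta>, snd h $ 1) < \<epsilon>" using norm_Pair_le[of \<theta> "snd h $ 1"] by simp
    moreover have "(\<theta>, snd h $ 1) \<in> screw_part G" using strip h \<theta>(2) unfolding screw_part_def by auto
    ultimately have "(\<theta>, snd h $ 1) = 0" by (rule disc[rotated])
    then show "h \<in> N" using \<theta>(2) unfolding N_def by (simp add: zero_prod_def)
  qed
  moreover have "N \<subseteq> U" using \<delta>(1) eps unfolding U_def N_def by auto
  ultimately have "G \<inter> N = G \<inter> U" by blast
  then have "openin (top_of_set G) (G \<inter> N)" using \<open>open U\<close> by (simp add: openin_open_Int)
  moreover have "closedin (top_of_set G) (G \<inter> N)" using \<open>closed N\<close> by (rule closedin_closed_Int)
  moreover have "aff_one \<in> G \<inter> N" using G unfolding aff_group_def N_def aff_one_def by auto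
  ultimately have "G \<inter> N = G" using conn unfolding connected_clopen by blast
  then show ?thesis using g unfolding N_def by blast
qed

lemma screw_part_contains_line:
  assumes G: "aff_group G" and "closed G" "connected G" and K: "fst ` G = K"
    and strip: "\<forall>g\<in>G. (fst g, (snd g $ 1) *\<^sub>R e1) \<in> G"
  obtains u where "u \<noteq> 0" "\<And>t. t *\<^sub>R u \<in> screw_part G"
proof -
  have "\<exists>z\<in>screw_part G. z \<noteq> 0 \<and> norm z < e" if "e > 0" for e
  proof -
    obtain a where a: "(expB2 pi, a) \<in> G" using exists_over_expB2[OF K] .
    have "expB2 pi \<noteq> mat 1" by (simp add: mat3_eq_iff)
    moreover have "fst ` G \<subseteq> K" using K by simp
    ultimately show ?thesis
      using discrete_screw_part_imp_linear_part_one[OF G \<open>connected G\<close> _ strip \<open>e > 0\<close> _ a]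
      by auto
  qed
  with closed_add_subgroup_contains_line[OF closed_screw_part[OF assms(2)] add_subgroup_screw_part[OF G]]
  show ?thesis using that by blast
qed

subsection \<open>Tangent spaces of orbits\<close>

definition helix :: "real \<Rightarrow> vec3 \<Rightarrow> real \<Rightarrow> aff" where
  "helix \<alpha> w t = (expB2 (\<alpha> * t), t *\<^sub>R w)"

lemma helix_zero [simp]: "helix \<alpha> w 0 = aff_one"
  by (simp add: helix_def aff_one_def)

lemma has_vector_derivative_helix: "(helix \<alpha> w has_vector_derivative (\<alpha> *\<^sub>R B2, w)) (at 0)"
  unfolding helix_def
  by (intro has_vector_derivative_Pair has_vector_derivative_expB2)
    (auto intro!: derivative_eq_intros)

lemma screw_part_line_iff_helix: "t *\<^sub>R u \<in> screw_part G \<longleftrightarrow> helix (fst u) (snd u *\<^sub>R e1) t \<in> G"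
  by (simp add: screw_part_def helix_def mult.commute)

lemma helix_in_orbit_tangent:
  assumes "\<And>t. helix \<alpha> w t \<in> G"
  shows "\<alpha> *\<^sub>R (B2 *v x) + w \<in> orbit_tangent G x"
proof -
  have "\<alpha> *\<^sub>R (B2 *v x) + w = fst (\<alpha> *\<^sub>R B2, w) *v x + snd (\<alpha> *\<^sub>R B2, w)"
    by (simp add: scaleR_matrix_vector_assoc)
  then show ?thesis
    unfolding orbit_tangent_def using assms has_vector_derivative_helix helix_zero by blast
qed

lemma span_e2_e3_transversal:
  assumes "y $ 1 \<noteq> 0"
  shows "span {e2, e3, y} = UNIV"
proof -
  have "w \<in> span {e2, e3, y}" for w
  proof -
    define a where "a = w $ 1 / y $ 1"
    have "w = a *\<^sub>R y + (w $ 2 - a * y $ 2) *\<^sub>R e2 + (w $ 3 - a * y $ 3) *\<^sub>R e3"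
      using assms by (simp add: vec3_eq_iff a_def)
    moreover have "a *\<^sub>R y + (w $ 2 - a * y $ 2) *\<^sub>R e2 + (w $ 3 - a * y $ 3) *\<^sub>R e3 \<in> span {e2, e3, y}"
      by (intro span_add span_mul span_base) auto
    ultimately show ?thesis by simp
  qed
  then show ?thesis by auto
qed

lemma dim_ne_2_if_contains_e2_e3_transversal:
  assumes "e2 \<in> S" "e3 \<in> S" "y \<in> S" "y $ 1 \<noteq> 0"
  shows "dim S \<noteq> 2"
proof -
  have "span {e2, e3, y} \<subseteq> span S" using assms by (intro span_mono) auto
  then have "dim S = dim (UNIV :: vec3 set)"
    using span_e2_e3_transversal[OF assms(4)] by (metis dim_span top.extremum_uniqueI)
  then show ?thesis by simp
qed

text \<open>An element of \<open>G\<close> near the identity differs from a point of the screw line by a small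
  axial translation, which must vanish.\<close>
lemma near_one_on_screw_line:
  assumes G: "aff_group G" and K: "fst ` G \<subseteq> K"
    and axial: "\<forall>g\<in>G. snd g = (snd g $ 1) *\<^sub>R e1"
    and screw: "\<And>\<theta>. helix 1 (c *\<^sub>R e1) \<theta> \<in> G"
    and eps: "\<epsilon> > 0" and disc: "\<And>s. s *\<^sub>R e1 \<in> translation_part G \<Longrightarrow> \<bar>s\<bar> < \<epsilon> \<Longrightarrow> s = 0"
  obtains \<delta> where "\<delta> > 0"
    "\<And>g. g \<in> G \<Longrightarrow> dist g aff_one < \<delta> \<Longrightarrow> \<exists>\<theta>. \<bar>\<theta>\<bar> < pi / 2 \<and> g = helix 1 (c *\<^sub>R e1) \<theta>"
proof -
  define \<eta> where "\<eta> = min (pi / 2) (\<epsilon> / (2 * (\<bar>c\<bar> + 1)))"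
  have \<eta>: "0 < \<eta>" "\<eta> \<le> pi / 2" "\<bar>c\<bar> * \<eta> \<le> \<epsilon> / 2"
  proof -
    show "0 < \<eta>" using eps unfolding \<eta>_def by simp
    show "\<eta> \<le> pi / 2" unfolding \<eta>_def by (rule min.cobounded1)
    have "\<bar>c\<bar> * \<eta> \<le> \<bar>c\<bar> * (\<epsilon> / (2 * (\<bar>c\<bar> + 1)))"
      unfolding \<eta>_def by (intro mult_left_mono min.cobounded2) simp
    also have "\<dots> \<le> \<epsilon> / 2" using eps by (simp add: field_simps)
    finally show "\<bar>c\<bar> * \<eta> \<le> \<epsilon> / 2" .
  qed
  obtain \<delta> where \<delta>: "0 < \<delta>" "\<And>\<theta>. \<bar>\<theta>\<bar> \<le> pi \<Longrightarrow> norm (expB2 \<theta> - mat 1) < \<delta> \<Longrightarrow> \<bar>\<theta>\<bar> < \<eta>"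
    using expB2_near_one[OF \<eta>(1)] by blast
  show ?thesis
  proof (rule that[of "min \<delta> (\<epsilon> / 2)"])
    show "min \<delta> (\<epsilon> / 2) > 0" using \<delta>(1) eps by simp
    fix g assume g: "g \<in> G" "dist g aff_one < min \<delta> (\<epsilon> / 2)"
    obtain \<theta> where \<theta>: "\<bar>\<theta>\<bar> \<le> pi" "fst g = expB2 \<theta>" using K g(1) K_representative by blast
    define a where "a = snd g $ 1"
    have "norm (fst g - mat 1) < \<delta>" using dist_fst_le[of g aff_one] g(2) by (simp add: aff_one_def dist_norm)
    then have \<theta>_small: "\<bar>\<theta>\<bar> < \<eta>" using \<delta>(2) \<theta> by simp
    have "\<bar>a\<bar> < \<epsilon> / 2"
      using dist_snd_le[of g aff_one] g(2) component_le_norm_cart[of "snd g" 1]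
      by (simp add: aff_one_def a_def dist_norm)
    moreover have "\<bar>c\<bar> * \<bar>\<theta>\<bar> \<le> \<bar>c\<bar> * \<eta>" using \<theta>_small by (intro mult_left_mono) simp_all
    then have "\<bar>c * \<theta>\<bar> \<le> \<epsilon> / 2" using \<eta>(3) by (simp add: abs_mult)
    ultimately have small: "\<bar>a - c * \<theta>\<bar> < \<epsilon>" by linarith
    have g_eq: "g = (expB2 \<theta>, a *\<^sub>R e1)" using axial g(1) \<theta>(2) unfolding a_def by (metis prod.collapse)
    have "aff_mult (aff_inv (helix 1 (c *\<^sub>R e1) \<theta>)) g \<in> G"
      using G g(1) screw by (intro aff_group_mult aff_group_inv)
    then have "(a - c * \<theta>) *\<^sub>R e1 \<in> translation_part G"
      unfolding g_eq translation_part_def helix_def by (simp add: algebra_simps)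
    then have "a = c * \<theta>" using disc[OF _ small] by simp
    then show "\<exists>\<theta>. \<bar>\<theta>\<bar> < pi / 2 \<and> g = helix 1 (c *\<^sub>R e1) \<theta>"
      using \<theta>_small \<eta>(2) g_eq by (intro exI[of _ \<theta>]) (simp add: helix_def)
  qed
qed

lemma has_real_derivative_fst_entry:
  fixes \<gamma> :: "real \<Rightarrow> aff"
  assumes "(\<gamma> has_vector_derivative v) F"
  shows "((\<lambda>t. fst (\<gamma> t) $ i $ j) has_real_derivative (fst v $ i $ j)) F"
proof -
  have "bounded_linear (\<lambda>p::aff. fst p $ i $ j)"
    by (intro bounded_linear_compose[OF bounded_linear_vec_nth] bounded_linear_compose[OF bounded_linear_vec_nth]
        bounded_linear_fst)
  from bounded_linear.has_vector_derivative[OF this assms] show ?thesis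
    by (simp add: has_real_derivative_iff_has_vector_derivative)
qed

text \<open>Near \<open>t = 0\<close> the curve runs along the helix, and its angle \<open>arcsin (\<gamma>(t)\<^sub>2\<^sub>3)\<close> is
  differentiable.\<close>
lemma velocity_of_curve_near_helix:
  assumes \<delta>: "\<delta> > 0" "\<And>g. g \<in> G \<Longrightarrow> dist g aff_one < \<delta> \<Longrightarrow> \<exists>\<theta>. \<bar>\<theta>\<bar> < pi / 2 \<and> g = helix 1 w \<theta>"
    and \<gamma>: "\<And>t. \<gamma> t \<in> G" "\<gamma> 0 = aff_one" "(\<gamma> has_vector_derivative v) (at 0)"
  shows "v = fst v $ 2 $ 3 *\<^sub>R (B2, w)"
proof -
  define \<phi> where "\<phi> t = arcsin (fst (\<gamma> t) $ 2 $ 3)" for t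
  obtain d where d: "d > 0" "\<And>t. dist t 0 < d \<Longrightarrow> dist (\<gamma> t) aff_one < \<delta>"
    using has_vector_derivative_continuous[OF \<gamma>(3)] \<delta>(1) \<gamma>(2)
    unfolding continuous_at_eps_delta by metis
  have near: "(helix 1 w \<circ> \<phi>) t = \<gamma> t" if t: "t \<in> ball 0 d" for t
  proof -
    have "dist (\<gamma> t) aff_one < \<delta>" using d(2) t by (simp add: dist_commute)
    then obtain \<theta> where "\<bar>\<theta>\<bar> < pi / 2" "\<gamma> t = helix 1 w \<theta>" using \<delta>(2)[OF \<gamma>(1)] by blast
    moreover from this have "\<phi> t = \<theta>" by (simp add: \<phi>_def helix_def arcsin_sin)
    ultimately show ?thesis by simp
  qed
  have \<phi>0: "\<phi> 0 = 0" using \<gamma>(2) by (simp add: \<phi>_def aff_one_def)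
  have "(\<phi> has_real_derivative 1 * fst v $ 2 $ 3) (at 0)"
    unfolding \<phi>_def
    using DERIV_chain2[OF _ has_real_derivative_fst_entry[OF \<gamma>(3)], of arcsin 1 2 3]
      DERIV_arcsin[of 0] \<gamma>(2) by (simp add: aff_one_def o_def)
  then have "(\<phi> has_vector_derivative fst v $ 2 $ 3) (at 0)"
    by (simp add: has_real_derivative_iff_has_vector_derivative)
  moreover have "(helix 1 w has_vector_derivative (B2, w)) (at (\<phi> 0))"
    using has_vector_derivative_helix[of 1 w] \<phi>0 by simp
  ultimately have "((helix 1 w \<circ> \<phi>) has_vector_derivative fst v $ 2 $ 3 *\<^sub>R (B2, w)) (at 0)"
    by (rule vector_diff_chain_at)
  moreover have "(0::real) \<in> ball 0 d" using d(1) by simp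
  ultimately have "(\<gamma> has_vector_derivative fst v $ 2 $ 3 *\<^sub>R (B2, w)) (at 0)"
    by (rule has_vector_derivative_transform_within_open[OF _ open_ball _ near])
  then show ?thesis using \<gamma>(3) by (rule vector_derivative_unique_at[rotated])
qed

lemma orbit_tangent_screw_group:
  assumes G: "aff_group G" and K: "fst ` G \<subseteq> K"
    and axial: "\<forall>g\<in>G. snd g = (snd g $ 1) *\<^sub>R e1"
    and screw: "\<And>\<theta>. helix 1 (c *\<^sub>R e1) \<theta> \<in> G"
    and eps: "\<epsilon> > 0" and disc: "\<And>s. s *\<^sub>R e1 \<in> translation_part G \<Longrightarrow> \<bar>s\<bar> < \<epsilon> \<Longrightarrow> s = 0"
    and y: "y \<in> orbit_tangent G x"
  shows "y \<in> span {B2 *v x + c *\<^sub>R e1}"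
proof -
  obtain \<delta> where \<delta>: "\<delta> > 0"
    "\<And>g. g \<in> G \<Longrightarrow> dist g aff_one < \<delta> \<Longrightarrow> \<exists>\<theta>. \<bar>\<theta>\<bar> < pi / 2 \<and> g = helix 1 (c *\<^sub>R e1) \<theta>"
    using near_one_on_screw_line[OF G K axial screw eps disc] by blast
  obtain v \<gamma> where yv: "y = fst v *v x + snd v" and \<gamma>: "\<And>t. \<gamma> t \<in> G" "\<gamma> 0 = aff_one"
    "(\<gamma> has_vector_derivative v) (at 0)"
    using y unfolding orbit_tangent_def by blast
  define l where "l = fst v $ 2 $ 3"
  have "v = l *\<^sub>R (B2, c *\<^sub>R e1)"
    unfolding l_def by (rule velocity_of_curve_near_helix[OF \<delta> \<gamma>])
  then have "y = l *\<^sub>R (B2 *v x + c *\<^sub>R e1)"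
    unfolding yv by (simp add: scaleR_matrix_vector_assoc scaleR_right_distrib)
  then show ?thesis by (simp add: span_base span_scale)
qed

lemma axial_component_strip:
  assumes G: "aff_group G" and plane: "\<And>w. w $ 1 = 0 \<Longrightarrow> w \<in> translation_part G" and g: "g \<in> G"
  shows "(fst g, (snd g $ 1) *\<^sub>R e1) \<in> G"
proof -
  have "(fst g, snd g + ((snd g $ 1) *\<^sub>R e1 - snd g)) \<in> G"
    using g by (intro translation_part_add[OF G] plane) simp_all
  then show ?thesis by simp
qed

text \<open>If \<open>G\<close> contains all rotations \<open>(exp(\<theta> B\<^sub>2), 0)\<close>, the axial components of the elements of
  \<open>G\<close> are axial translations in \<open>G\<close>; they form a connected set containing \<open>0\<close>, hence a
  segment, which generates the whole axis.\<close>
lemma axis_in_translation_part_if_rotations: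
  assumes G: "aff_group G" and conn: "connected G" and K: "fst ` G = K"
    and strip: "\<forall>g\<in>G. (fst g, (snd g $ 1) *\<^sub>R e1) \<in> G"
    and rot: "\<And>\<theta>. (expB2 \<theta>, 0) \<in> G" and g0: "g0 \<in> G" "snd g0 $ 1 \<noteq> 0"
  shows "r *\<^sub>R e1 \<in> translation_part G"
proof (rule add_subgroup_segment_imp_line[OF add_subgroup_translation_part[OF G] g0(2)])
  fix s assume s: "min 0 (snd g0 $ 1) \<le> s" "s \<le> max 0 (snd g0 $ 1)"
  define S where "S = (\<lambda>g. snd g $ 1) ` G"
  have "connected S" unfolding S_def by (intro connected_continuous_image conn continuous_intros)
  moreover have "0 \<in> S" using aff_group_one[OF G] unfolding S_def by force
  moreover have "snd g0 $ 1 \<in> S" using g0(1) unfolding S_def by blast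
  ultimately have "min 0 (snd g0 $ 1) \<in> S" "max 0 (snd g0 $ 1) \<in> S" "connected S"
    by (simp_all add: min_def max_def)
  then have "s \<in> S" using s unfolding connected_iff_interval by blast
  then have "s \<in> (\<lambda>g. snd g $ 1) ` G" unfolding S_def .
  then obtain g where g: "g \<in> G" "s = snd g $ 1" by blast
  obtain \<theta> where "g = (expB2 \<theta>, snd g)" using fst_in_K_representative[OF K g(1)] .
  then have "(expB2 \<theta>, s *\<^sub>R e1) \<in> G" using strip g by (metis fst_conv)
  then have "aff_mult (expB2 (- \<theta>), 0) (expB2 \<theta>, s *\<^sub>R e1) \<in> G"
    using G rot by (intro aff_group_mult)
  then show "s *\<^sub>R e1 \<in> translation_part G" by (simp add: translation_part_def)
qed

lemma eq_Iso_R2_if_plane_translations: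
  assumes G: "aff_group G" and K: "fst ` G = K"
    and plane: "\<And>w. w $ 1 = 0 \<Longrightarrow> w \<in> translation_part G" and orth: "\<forall>g\<in>G. snd g $ 1 = 0"
  shows "G = Iso_R2"
proof
  show "G \<subseteq> Iso_R2"
  proof
    fix g assume g: "g \<in> G"
    obtain \<theta> where "g = (expB2 \<theta>, snd g)" using fst_in_K_representative[OF K g] .
    moreover have "snd g = (snd g $ 2) *\<^sub>R e2 + (snd g $ 3) *\<^sub>R e3" using orth g by (simp add: vec3_eq_iff)
    ultimately have "g = (expB2 \<theta>, (snd g $ 2) *\<^sub>R e2 + (snd g $ 3) *\<^sub>R e3)" by simp
    then show "g \<in> Iso_R2" unfolding Iso_R2_def by fast
  qed
  show "Iso_R2 \<subseteq> G"
  proof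
    fix g assume "g \<in> Iso_R2"
    then obtain \<theta> u v where g: "g = (expB2 \<theta>, u *\<^sub>R e2 + v *\<^sub>R e3)" unfolding Iso_R2_def by blast
    obtain a where a: "(expB2 \<theta>, a) \<in> G" using exists_over_expB2[OF K] .
    have "(expB2 \<theta>, a + (u *\<^sub>R e2 + v *\<^sub>R e3 - a)) \<in> G"
      using orth a by (intro translation_part_add[OF G a] plane) force
    then show "g \<in> G" using g by simp
  qed
qed

lemma transversal_helix_if_plane_translations:
  assumes G: "aff_group G" and "closed G" and conn: "connected G" and K: "fst ` G = K"
    and plane: "\<And>w. w $ 1 = 0 \<Longrightarrow> w \<in> translation_part G" and g0: "g0 \<in> G" "snd g0 $ 1 \<noteq> 0"
  obtains \<alpha> \<beta> where "\<And>t. helix \<alpha> (\<beta> *\<^sub>R e1) t \<in> G" "\<beta> \<noteq> 0"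
proof -
  have strip: "\<forall>g\<in>G. (fst g, (snd g $ 1) *\<^sub>R e1) \<in> G" using axial_component_strip[OF G plane] by blast
  obtain u where u: "u \<noteq> 0" "\<And>t. helix (fst u) (snd u *\<^sub>R e1) t \<in> G"
    using screw_part_contains_line[OF assms(1-4) strip] unfolding screw_part_line_iff_helix by blast
  show ?thesis
  proof (cases "snd u = 0")
    case True
    then have "fst u \<noteq> 0" using u(1) by (simp add: prod_eq_iff)
    then have "(expB2 \<theta>, 0) \<in> G" for \<theta>
      using u(2)[of "\<theta> / fst u"] True by (simp add: helix_def)
    then have "r *\<^sub>R e1 \<in> translation_part G" for r
      using axis_in_translation_part_if_rotations[OF G conn K strip _ g0] by blast
    then show ?thesis using that[of 0 1] by (simp add: helix_def translation_part_def)
  next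
    case False
    show ?thesis by (rule that[OF u(2) False])
  qed
qed

lemma plane_case:
  assumes G: "aff_group G" and "closed G" and conn: "connected G" and K: "fst ` G = K"
    and coh: "cohomogeneity_one G" and plane: "\<And>w. w $ 1 = 0 \<Longrightarrow> w \<in> translation_part G"
  shows "G = Iso_R2"
proof (cases "\<forall>g\<in>G. snd g $ 1 = 0")
  case True
  show ?thesis using eq_Iso_R2_if_plane_translations[OF G K plane True] .
next
  case False
  then obtain g0 where g0: "g0 \<in> G" "snd g0 $ 1 \<noteq> 0" by blast
  obtain \<alpha> \<beta> where helix: "\<And>t. helix \<alpha> (\<beta> *\<^sub>R e1) t \<in> G" and \<beta>: "\<beta> \<noteq> 0"
    using transversal_helix_if_plane_translations[OF assms(1-4) _ g0] plane by blast
  obtain x where x: "dim (orbit_tangent G x) = 2" using coh unfolding cohomogeneity_one_def by blast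
  have "e2 \<in> orbit_tangent G x" "e3 \<in> orbit_tangent G x"
    using helix_in_orbit_tangent[of 0 e2 G x] helix_in_orbit_tangent[of 0 e3 G x] plane
    by (simp_all add: helix_def translation_part_def)
  moreover have "\<alpha> *\<^sub>R (B2 *v x) + \<beta> *\<^sub>R e1 \<in> orbit_tangent G x" by (rule helix_in_orbit_tangent[OF helix])
  moreover have "(\<alpha> *\<^sub>R (B2 *v x) + \<beta> *\<^sub>R e1) $ 1 \<noteq> 0" using \<beta> by (simp add: matrix_vector_mult_nth3)
  ultimately show ?thesis using dim_ne_2_if_contains_e2_e3_transversal x by blast
qed

lemma closed_axis_translations:
  assumes "closed G"
  shows "closed {s. s *\<^sub>R e1 \<in> translation_part G}"
proof -
  have "closed (UNIV \<inter> (\<lambda>s::real. (mat 1 :: mat3, s *\<^sub>R e1)) -` G)"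
    using assms by (intro continuous_closed_preimage continuous_intros) simp_all
  then show ?thesis by (simp add: translation_part_def vimage_def)
qed

lemma add_subgroup_axis_translations:
  assumes "aff_group G"
  shows "add_subgroup {s. s *\<^sub>R e1 \<in> translation_part G}"
  using add_subgroup_translation_part[OF assms] unfolding add_subgroup_def
  by (simp add: scaleR_diff_left)

lemma eq_SO2_times_R_if_axis_translations:
  assumes G: "aff_group G" and K: "fst ` G = K"
    and axial: "\<forall>g\<in>G. snd g = (snd g $ 1) *\<^sub>R e1" and axis: "\<And>s. s *\<^sub>R e1 \<in> translation_part G"
  shows "G = SO2_times_R"
proof
  show "G \<subseteq> SO2_times_R"
  proof
    fix g assume g: "g \<in> G"
    obtain \<theta> where "g = (expB2 \<theta>, snd g)" using fst_in_K_representative[OF K g] .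
    then have "g = (expB2 \<theta>, (snd g $ 1) *\<^sub>R e1)" using axial g by simp
    then show "g \<in> SO2_times_R" unfolding SO2_times_R_def by fast
  qed
  show "SO2_times_R \<subseteq> G"
  proof
    fix g assume "g \<in> SO2_times_R"
    then obtain \<theta> s where g: "g = (expB2 \<theta>, s *\<^sub>R e1)" unfolding SO2_times_R_def by blast
    obtain a where a: "(expB2 \<theta>, a) \<in> G" using exists_over_expB2[OF K] .
    have "(expB2 \<theta>, a + (s - a $ 1) *\<^sub>R e1) \<in> G" using axis by (rule translation_part_add[OF G a])
    moreover have "a + (s - a $ 1) *\<^sub>R e1 = s *\<^sub>R e1"
    proof -
      have a_axial: "a = (a $ 1) *\<^sub>R e1" using axial a by force
      have "a $ 2 = 0" "a $ 3 = 0"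
        using arg_cong[OF a_axial, of "\<lambda>v. v $ 2"] arg_cong[OF a_axial, of "\<lambda>v. v $ 3"] by simp_all
      then show ?thesis by (simp add: vec3_eq_iff)
    qed
    ultimately show "g \<in> G" using g by simp
  qed
qed

lemma axis_translations_discrete:
  assumes G: "aff_group G" and "closed G" and s1: "s1 *\<^sub>R e1 \<notin> translation_part G"
  shows "\<exists>\<epsilon>>0. \<forall>s. s *\<^sub>R e1 \<in> translation_part G \<longrightarrow> \<bar>s\<bar> < \<epsilon> \<longrightarrow> s = 0"
proof (rule ccontr)
  assume "\<not> ?thesis"
  then have "\<exists>z\<in>{s. s *\<^sub>R e1 \<in> translation_part G}. z \<noteq> 0 \<and> \<bar>z\<bar> < e" if "e > 0" for e
    using that by blast
  then have "{s. s *\<^sub>R e1 \<in> translation_part G} = UNIV"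
    by (rule closed_add_subgroup_real_eq_UNIV[OF closed_axis_translations[OF assms(2)]
          add_subgroup_axis_translations[OF G]])
  then show False using s1 by auto
qed

lemma axial_case:
  assumes G: "aff_group G" and "closed G" "connected G" and K: "fst ` G = K"
    and coh: "cohomogeneity_one G" and axial: "\<forall>g\<in>G. snd g = (snd g $ 1) *\<^sub>R e1"
  shows "G = SO2_times_R"
proof (cases "\<forall>s. s *\<^sub>R e1 \<in> translation_part G")
  case True
  then show ?thesis using eq_SO2_times_R_if_axis_translations[OF G K axial] by blast
next
  case False
  then obtain s1 where "s1 *\<^sub>R e1 \<notin> translation_part G" by blast
  from axis_translations_discrete[OF G assms(2) this]
  obtain \<epsilon> where eps: "\<epsilon> > 0" and disc: "\<And>s. s *\<^sub>R e1 \<in> translation_part G \<Longrightarrow> \<bar>s\<bar> < \<epsilon> \<Longrightarrow> s = 0"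
    by blast
  have strip: "\<forall>g\<in>G. (fst g, (snd g $ 1) *\<^sub>R e1) \<in> G" using axial by (metis prod.collapse)
  obtain u where u: "u \<noteq> 0" "\<And>t. helix (fst u) (snd u *\<^sub>R e1) t \<in> G"
    using screw_part_contains_line[OF assms(1-4) strip] unfolding screw_part_line_iff_helix by blast
  have "fst u \<noteq> 0"
  proof
    assume "fst u = 0"
    then have "snd u \<noteq> 0" using u(1) by (simp add: prod_eq_iff)
    have "(\<epsilon> / 2) *\<^sub>R e1 \<in> translation_part G"
      using u(2)[of "\<epsilon> / 2 / snd u"] \<open>fst u = 0\<close> \<open>snd u \<noteq> 0\<close> by (simp add: helix_def translation_part_def)
    then show False using disc[of "\<epsilon> / 2"] eps by simp
  qed
  define c where "c = snd u / fst u"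
  have screw: "helix 1 (c *\<^sub>R e1) \<theta> \<in> G" for \<theta>
    using u(2)[of "\<theta> / fst u"] \<open>fst u \<noteq> 0\<close> by (simp add: helix_def c_def)
  obtain x where x: "dim (orbit_tangent G x) = 2" using coh unfolding cohomogeneity_one_def by blast
  have "orbit_tangent G x \<subseteq> span {B2 *v x + c *\<^sub>R e1}"
    using orbit_tangent_screw_group[OF G _ axial screw eps disc] K by blast
  then have "dim (orbit_tangent G x) \<le> card {B2 *v x + c *\<^sub>R e1}" by (rule dim_le_card) simp
  then show ?thesis using x by simp
qed

lemma fibre_translations_agree:
  assumes G: "aff_group G" and T: "\<And>v. v \<in> translation_part G \<Longrightarrow> v $ 2 = 0 \<and> v $ 3 = 0"
    and a: "(expB2 \<theta>, a) \<in> G" and b: "(expB2 \<theta>, b) \<in> G"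
  shows "a $ 2 = b $ 2 \<and> a $ 3 = b $ 3"
proof -
  have "aff_mult (aff_inv (expB2 \<theta>, a)) (expB2 \<theta>, b) \<in> G"
    using G a b by (intro aff_group_mult aff_group_inv)
  moreover define v where "v = expB2 (- \<theta>) *v (b - a)"
  ultimately have "v \<in> translation_part G"
    by (simp add: translation_part_def matrix_vector_mult_diff_distrib)
  then have "v $ 2 = 0" "v $ 3 = 0" using T by simp_all
  moreover have "b - a = expB2 \<theta> *v v" unfolding v_def by simp
  ultimately have "(b - a) $ 2 = 0" "(b - a) $ 3 = 0" by (simp_all add: matrix_vector_mult_nth3)
  then show ?thesis by simp
qed

text \<open>Comparing \<open>(exp(\<theta> B\<^sub>2), a)\<close> with its conjugate by an element over the rotation by \<open>\<pi>\<close>,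
  which acts as \<open>-1\<close> on \<open>span {e\<^sub>2, e\<^sub>3}\<close>, shows that the orthogonal part of \<open>a\<close> is the
  coboundary \<open>w\<^sub>0 - exp(\<theta> B\<^sub>2) w\<^sub>0\<close>.\<close>
lemma translation_parts_coboundary:
  assumes G: "aff_group G" and K: "fst ` G = K"
    and T: "\<And>v. v \<in> translation_part G \<Longrightarrow> v $ 2 = 0 \<and> v $ 3 = 0"
  obtains w0 where "w0 $ 1 = 0"
    "\<And>\<theta> a. (expB2 \<theta>, a) \<in> G \<Longrightarrow> a $ 2 = (w0 - expB2 \<theta> *v w0) $ 2 \<and> a $ 3 = (w0 - expB2 \<theta> *v w0) $ 3"
proof -
  obtain a0 where a0: "(expB2 pi, a0) \<in> G" using exists_over_expB2[OF K] .
  define w0 where "w0 = (1 / 2) *\<^sub>R (a0 - (a0 $ 1) *\<^sub>R e1)"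
  have "a $ 2 = (w0 - expB2 \<theta> *v w0) $ 2 \<and> a $ 3 = (w0 - expB2 \<theta> *v w0) $ 3"
    if a: "(expB2 \<theta>, a) \<in> G" for \<theta> a
  proof -
    have m1: "(expB2 (\<theta> + pi), expB2 \<theta> *v a0 + a) \<in> G" using aff_group_mult[OF G a a0] by simp
    have m2: "(expB2 (\<theta> + pi), expB2 pi *v a + a0) \<in> G"
      using aff_group_mult[OF G a0 a] by (simp add: add.commute)
    have "(expB2 \<theta> *v a0 + a) $ 2 = (expB2 pi *v a + a0) $ 2 \<and>
        (expB2 \<theta> *v a0 + a) $ 3 = (expB2 pi *v a + a0) $ 3"
      using fibre_translations_agree[OF G T m1 m2] .
    then show ?thesis by (simp add: matrix_vector_mult_nth3 w0_def algebra_simps)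
  qed
  moreover have "w0 $ 1 = 0" by (simp add: w0_def)
  ultimately show ?thesis using that by blast
qed

lemma aff_conj_image_preserves:
  assumes "invertible Q"
  shows "aff_group G \<Longrightarrow> aff_group (aff_conj (Q, b) ` G)"
    and "closed G \<Longrightarrow> closed (aff_conj (Q, b) ` G)"
    and "connected G \<Longrightarrow> connected (aff_conj (Q, b) ` G)"
    and "cohomogeneity_one G \<Longrightarrow> cohomogeneity_one (aff_conj (Q, b) ` G)"
    and "fst ` aff_conj (Q, b) ` G = (\<lambda>A. Q ** A ** matrix_inv Q) ` fst ` G"
  using assms
  by (simp_all add: aff_group_conj closed_aff_conj_image connected_aff_conj_image
      cohomogeneity_one_aff_conj_image image_image fst_aff_conj)

lemma orthogonal_translations_case:
  assumes G: "aff_group G" and cl: "closed G" and conn: "connected G" and K: "fst ` G = K"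
    and coh: "cohomogeneity_one G"
    and T: "\<And>v. v \<in> translation_part G \<Longrightarrow> v $ 2 = 0 \<and> v $ 3 = 0"
  obtains w0 where "G = aff_conj (mat 1, w0) ` SO2_times_R"
proof -
  obtain w0 where w0: "w0 $ 1 = 0"
    "\<And>\<theta> a. (expB2 \<theta>, a) \<in> G \<Longrightarrow> a $ 2 = (w0 - expB2 \<theta> *v w0) $ 2 \<and> a $ 3 = (w0 - expB2 \<theta> *v w0) $ 3"
    using translation_parts_coboundary[OF G K T] by blast
  define G1 where "G1 = aff_conj (mat 1, - w0) ` G"
  have "fst ` G1 = K"
    unfolding G1_def aff_conj_image_preserves(5)[OF invertible_mat_one] K
    by (simp add: matrix_inv_mat_one)
  moreover have "\<forall>h\<in>G1. snd h = (snd h $ 1) *\<^sub>R e1"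
  proof
    fix h assume "h \<in> G1"
    then obtain k where k: "k \<in> G" "h = aff_conj (mat 1, - w0) k" unfolding G1_def by blast
    obtain \<theta> where \<theta>: "k = (expB2 \<theta>, snd k)" using fst_in_K_representative[OF K k(1)] .
    from k(2) have "h = aff_conj (mat 1, - w0) (expB2 \<theta>, snd k)" by (subst (asm) \<theta>)
    then have "h = (expB2 \<theta>, snd k - w0 + expB2 \<theta> *v w0)"
      by (simp add: aff_conj_Pair matrix_inv_mat_one)
    then show "snd h = (snd h $ 1) *\<^sub>R e1"
      using w0(2)[of \<theta> "snd k"] w0(1) k(1) \<theta> by (simp add: vec3_eq_iff)
  qed
  ultimately have "G1 = SO2_times_R"
    unfolding G1_def using invertible_mat_one
    by (intro axial_case aff_conj_image_preserves G cl conn coh) simp_all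
  moreover have "G = aff_conj (mat 1, w0) ` G1"
    using image_aff_conj_inv[of "(mat 1, - w0)" G] unfolding G1_def
    by (simp add: invertible_mat_one matrix_inv_mat_one)
  ultimately show ?thesis using that by blast
qed

lemma classification_linear_part_K:
  assumes G: "aff_group G" and cl: "closed G" and conn: "connected G" and K: "fst ` G = K"
    and coh: "cohomogeneity_one G"
  obtains g where "fst g = mat 1" "G = aff_conj g ` SO2_times_R \<or> G = aff_conj g ` Iso_R2"
proof (cases "\<exists>v\<in>translation_part G. v $ 2 \<noteq> 0 \<or> v $ 3 \<noteq> 0")
  case True
  then obtain v where "v \<in> translation_part G" "v $ 2 \<noteq> 0 \<or> v $ 3 \<noteq> 0" by blast
  then have "w \<in> translation_part G" if "w $ 1 = 0" for w
    using rotation_invariant_subgroup_contains_plane[OF add_subgroup_translation_part[OF G]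
        expB2_translation_part[OF G K]] that by blast
  then have "G = aff_conj aff_one ` Iso_R2" by (simp add: aff_conj_one plane_case[OF assms])
  then show ?thesis using that[of aff_one] by (simp add: aff_one_def)
next
  case False
  then obtain w0 where "G = aff_conj (mat 1, w0) ` SO2_times_R"
    using orthogonal_translations_case[OF assms] by blast
  then show ?thesis using that[of "(mat 1, w0)"] by simp
qed

lemma aff_group_if_is_subgroup: "is_subgroup G \<Longrightarrow> aff_group G"
  unfolding is_subgroup_def aff_group_def SOo12_semidirect_def SOo12_def
  by (auto simp: invertible_det_nz)

lemma linear_part_aff_conj_inverse:
  assumes P: "invertible P" and L: "fst ` G = (\<lambda>k. P ** k ** matrix_inv P) ` K"
  shows "fst ` aff_conj (matrix_inv P, b) ` G = K"
proof -
  have "fst ` aff_conj (matrix_inv P, b) ` G = (\<lambda>A. matrix_inv P ** A ** matrix_inv (matrix_inv P)) ` fst ` G"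
    by (rule aff_conj_image_preserves(5)[OF invertible_matrix_inv[OF P]])
  also have "\<dots> = K"
    unfolding L image_image
    by (simp add: matrix_inv_matrix_inv[OF P] matrix_mul_assoc matrix_inv_left[OF P])
      (simp add: matrix_mul_assoc[symmetric] matrix_inv_left[OF P])
  finally show ?thesis .
qed

theorem lemma3p1:
  fixes G :: "((real^3^3) \<times> (real^3)) set"
  assumes "is_subgroup G" and "closed G" and "connected G"
    and "cohomogeneity_one G"
    and "\<exists>P\<in>SOo12. Lpart G = (\<lambda>k. P ** k ** matrix_inv P) ` K"
  shows "\<exists>g\<in>SOo12_semidirect. G = conj_aff g SO2_times_R \<or> G = conj_aff g Iso_R2"
proof -
  obtain P where P: "P \<in> SOo12" "fst ` G = (\<lambda>k. P ** k ** matrix_inv P) ` K"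
    using assms(5) unfolding Lpart_def by blast
  have iP: "invertible P" using P(1) unfolding SOo12_def by (simp add: invertible_det_nz)
  note conj = aff_conj_image_preserves[OF invertible_matrix_inv[OF iP], where b = 0]
  obtain g where g: "fst g = mat 1"
    "aff_conj (matrix_inv P, 0) ` G = aff_conj g ` SO2_times_R \<or>
     aff_conj (matrix_inv P, 0) ` G = aff_conj g ` Iso_R2"
    by (rule classification_linear_part_K[OF conj(1)[OF aff_group_if_is_subgroup[OF assms(1)]]
          conj(2)[OF assms(2)] conj(3)[OF assms(3)] linear_part_aff_conj_inverse[OF iP P(2)]
          conj(4)[OF assms(4)]])
  then have "G = conj_aff (aff_mult (P, 0) g) SO2_times_R \<or> G = conj_aff (aff_mult (P, 0) g) Iso_R2"
    by (simp add: conj_aff_eq_image aff_conj_image_eq_iff aff_conj_image_aff_conj_image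
        invertible_matrix_inv iP matrix_inv_matrix_inv invertible_mat_one)
  moreover have "aff_mult (P, 0) g \<in> SOo12_semidirect"
    using g(1) P(1) unfolding SOo12_semidirect_def by (simp add: aff_mult_def)
  ultimately show ?thesis by blast
qed

end
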